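(* Let $H$ be a finite non-cyclic subgroup of $\mathrm{GL}(2,\mathbb{C})$ and $L:\mathcal{A}_2\to\mathrm{GL}(2,\mathbb{C})$ the linear-part morphism. Then the derived subgroup of $L^{-1}(H)=H\ltimes\mathbb{C}^2$ equals $D(H)\ltimes\mathbb{C}^2=L^{-1}(D(H))$.
   Context: $\mathcal{A}_2$ is the group of affine automorphisms $v\mapsto Mv+w$ of $\mathbb{C}^2$ ($M\in\mathrm{GL}(2,\mathbb{C})$, $w\in\mathbb{C}^2$), $L(v\mapsto Mv+w)=M$, and $\mathbb{C}^2\subseteq\mathcal{A}_2$ denotes the subgroup of translations. $D(H)$ denotes the subgroup generated by all commutators $ghg^{-1}h^{-1}$ of elements of $H$. *)

theory Defs
  imports "HOL-Analysis.Analysis" "HOL-Algebra.Elementary_Groups" "HOL-Algebra.Generated_Groups"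
begin

definition GL2 :: "(complex^2^2) monoid" where
  "GL2 = \<lparr>carrier = {M. invertible M}, mult = (\<lambda>A B. A ** B), one = mat 1\<rparr>"

definition Aff2 :: "(complex^2 \<Rightarrow> complex^2) monoid" where
  "Aff2 = \<lparr>carrier = {f. \<exists>M w. invertible M \<and> f = (\<lambda>v. M *v v + w)},
           mult = (\<lambda>f g. f \<circ> g), one = id\<rparr>"

text \<open>Linear part L(v |-> M v + w) = M.\<close>
definition Lin :: "(complex^2 \<Rightarrow> complex^2) \<Rightarrow> complex^2^2" where
  "Lin f = matrix (\<lambda>v. f v - f 0)"

definition Lpre :: "(complex^2^2) set \<Rightarrow> (complex^2 \<Rightarrow> complex^2) set" where
  "Lpre K = {f \<in> carrier Aff2. Lin f \<in> K}"

end

theory Submission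
  imports Defs "HOL-Algebra.Multiplicative_Group"
begin

text \<open>
  Lin maps the derived subgroup of \<open>L\<^sup>-\<^sup>1(H)\<close> onto \<open>D(H)\<close>, and the linear embedding
  \<open>M \<mapsto> (v \<mapsto> M v)\<close> puts \<open>D(H)\<close> back inside it; so the statement reduces to showing that
  \<open>D(L\<^sup>-\<^sup>1(H))\<close> contains every translation. The commutator of \<open>v \<mapsto> h v\<close> with the
  translation by \<open>w\<close> is the translation by \<open>h w - w\<close>, and sums of two such displacements
  exhaust \<open>\<complex>\<^sup>2\<close> unless all displacements lie on one line \<open>\<complex> u\<close>. In that case \<open>H\<close>
  stabilises \<open>\<complex> u\<close>; the eigenvalue on \<open>u\<close> is a character whose kernel consists of
  unipotent elements of finite order, hence is trivial, so \<open>H\<close> embeds into the roots of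
  unity and is cyclic.
\<close>

lemma (in group) pow_card_subgroup_eq_one:
  assumes "subgroup H G" "h \<in> H"
  shows "h [^] card H = \<one>"
proof -
  interpret K: group "subgroup_generated G H" by simp
  have "h [^]\<^bsub>subgroup_generated G H\<^esub> order (subgroup_generated G H) = \<one>\<^bsub>subgroup_generated G H\<^esub>"
    using assms by (intro K.pow_order_eq_1) (simp add: subgroup.carrier_subgroup_generated_subgroup)
  then show ?thesis
    using assms by (simp add: order_def pow_subgroup_generated subgroup.carrier_subgroup_generated_subgroup)
qed

lemma (in group) cyclic_if_inj_character:
  fixes \<rho> :: "'a \<Rightarrow> complex"
  assumes H: "subgroup H G" and fin: "finite H" and inj: "inj_on \<rho> H"
    and \<rho>_one: "\<rho> \<one> = 1"
    and \<rho>_mult: "\<And>g h. g \<in> H \<Longrightarrow> h \<in> H \<Longrightarrow> \<rho> (g \<otimes> h) = \<rho> g * \<rho> h"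
  shows "cyclic_group (subgroup_generated G H)"
proof -
  define n where "n = card H"
  have n: "n > 0"
    using fin subgroup.one_closed[OF H] unfolding n_def by (auto simp: card_gt_0_iff)
  have pow_H: "h [^] k \<in> H \<and> \<rho> (h [^] k) = \<rho> h ^ k" if "h \<in> H" for h and k :: nat
    using that by (induction k) (auto simp: \<rho>_one \<rho>_mult subgroup.one_closed[OF H] subgroup.m_closed[OF H])
  have root: "\<rho> h ^ n = 1" if "h \<in> H" for h
    using pow_H[OF that, of n] pow_card_subgroup_eq_one[OF H that] \<rho>_one unfolding n_def by simp
  have roots: "\<rho> ` H = {z. z ^ n = 1}"
  proof (rule card_subset_eq)
    show "\<rho> ` H \<subseteq> {z. z ^ n = 1}"
      using root by auto
    show "card (\<rho> ` H) = card {z::complex. z ^ n = 1}"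
      using card_image[OF inj] card_roots_unity_eq[OF n] unfolding n_def by simp
  qed (use finite_roots_unity n in auto)
  have "cis (2 * pi / n) ^ n = cis (n * (2 * pi / n))"
    by (rule Complex.DeMoivre)
  also have "\<dots> = 1"
    using n by simp
  finally have "cis (2 * pi / n) ^ n = 1" .
  then obtain g where g: "g \<in> H" "\<rho> g = cis (2 * pi / n)"
    using roots by (metis (mono_tags, lifting) imageE mem_Collect_eq)
  have "\<exists>k::nat. h = g [^] k" if h: "h \<in> H" for h
  proof -
    obtain k where "\<rho> h = cis (2 * pi * real k / real n)"
      using h roots bij_betw_imp_surj_on[OF Complex.bij_betw_roots_unity[OF n]] by blast
    also have "\<dots> = \<rho> (g [^] k)"
      using pow_H[OF g(1)] g(2) by (simp add: Complex.DeMoivre mult_ac)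
    finally show ?thesis
      using inj h pow_H[OF g(1)] by (meson inj_onD)
  qed
  then have "H \<subseteq> range (\<lambda>m::int. g [^] m)"
    by (metis int_pow_int rangeI subsetI)
  moreover have "range (\<lambda>m::int. g [^] m) \<subseteq> H"
    using g(1) H by (auto intro: subgroup_int_pow_closed)
  ultimately have "carrier (subgroup_generated G H) = range (\<lambda>m::int. g [^]\<^bsub>subgroup_generated G H\<^esub> m)"
    using g(1) H by (simp add: subgroup.carrier_subgroup_generated_subgroup int_pow_subgroup_generated)
  then show ?thesis
    using g(1) H by (auto simp: group.cyclic_group subgroup.carrier_subgroup_generated_subgroup)
qed

definition aff :: "complex^2^2 \<Rightarrow> complex^2 \<Rightarrow> (complex^2 \<Rightarrow> complex^2)" where
  "aff M w = (\<lambda>v. M *v v + w)"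

lemma aff_comp: "aff M w \<circ> aff N z = aff (M ** N) (M *v z + w)"
  by (auto simp: aff_def fun_eq_iff matrix_vector_right_distrib matrix_vector_mul_assoc)

lemma Lin_aff [simp]: "Lin (aff M w) = M"
  by (simp add: Lin_def aff_def)

lemma id_eq_aff: "id = aff (mat 1) 0"
  by (simp add: aff_def fun_eq_iff)

lemma carrier_Aff2: "f \<in> carrier Aff2 \<longleftrightarrow> (\<exists>M w. invertible M \<and> f = aff M w)"
  by (simp add: Aff2_def aff_def)

lemma mult_Aff2 [simp]: "f \<otimes>\<^bsub>Aff2\<^esub> g = f \<circ> g"
  by (simp add: Aff2_def)

lemma one_Aff2 [simp]: "\<one>\<^bsub>Aff2\<^esub> = id"
  by (simp add: Aff2_def)

lemma carrier_GL2: "A \<in> carrier GL2 \<longleftrightarrow> invertible A"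
  by (simp add: GL2_def)

lemma mult_GL2 [simp]: "A \<otimes>\<^bsub>GL2\<^esub> B = A ** B"
  by (simp add: GL2_def)

lemma one_GL2 [simp]: "\<one>\<^bsub>GL2\<^esub> = mat 1"
  by (simp add: GL2_def)

lemma invertible_mat_1: "invertible (mat 1 :: 'a::field^'n^'n)"
  using invertible_left_inverse by fastforce

lemma group_GL2: "group GL2"
proof (rule groupI)
  show "x \<otimes>\<^bsub>GL2\<^esub> y \<in> carrier GL2" if "x \<in> carrier GL2" "y \<in> carrier GL2" for x y
    using that by (simp add: carrier_GL2 invertible_mult)
  show "\<exists>y\<in>carrier GL2. y \<otimes>\<^bsub>GL2\<^esub> x = \<one>\<^bsub>GL2\<^esub>" if x: "x \<in> carrier GL2" for x
  proof -
    obtain y where "y ** x = mat 1"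
      using x unfolding carrier_GL2 invertible_left_inverse ..
    moreover have "invertible y"
      using calculation unfolding invertible_right_inverse ..
    ultimately show ?thesis
      by (intro bexI[of _ y]) (simp_all add: carrier_GL2)
  qed
qed (simp_all add: carrier_GL2 invertible_mat_1 matrix_mul_assoc)

lemma aff_in_carrier_Aff2: "invertible M \<Longrightarrow> aff M w \<in> carrier Aff2"
  by (auto simp: carrier_Aff2)

lemma inv_aff_comp: "M' ** M = mat 1 \<Longrightarrow> aff M' (- (M' *v w)) \<circ> aff M w = id"
  by (simp add: aff_comp id_eq_aff)

lemma group_Aff2: "group Aff2"
proof (rule groupI)
  show "x \<otimes>\<^bsub>Aff2\<^esub> y \<in> carrier Aff2" if "x \<in> carrier Aff2" "y \<in> carrier Aff2" for x y
    using that unfolding carrier_Aff2 mult_Aff2 by (metis aff_comp invertible_mult)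
  show "\<exists>y\<in>carrier Aff2. y \<otimes>\<^bsub>Aff2\<^esub> x = \<one>\<^bsub>Aff2\<^esub>" if x: "x \<in> carrier Aff2" for x
  proof -
    obtain M w where "invertible M" "x = aff M w"
      using x unfolding carrier_Aff2 by blast
    moreover obtain M' where "M' ** M = mat 1"
      using \<open>invertible M\<close> invertible_left_inverse by blast
    moreover have "invertible M'"
      using \<open>M' ** M = mat 1\<close> invertible_right_inverse by blast
    ultimately show ?thesis
      using inv_aff_comp aff_in_carrier_Aff2 by (metis mult_Aff2 one_Aff2)
  qed
  show "\<one>\<^bsub>Aff2\<^esub> \<in> carrier Aff2"
    by (simp add: id_eq_aff aff_in_carrier_Aff2 invertible_mat_1)
qed (auto simp: comp_assoc)

lemma inv_Aff2_aff:
  assumes "M' ** M = mat 1"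
  shows "inv\<^bsub>Aff2\<^esub> (aff M w) = aff M' (- (M' *v w))"
proof -
  have "invertible M" "invertible M'"
    using assms invertible_left_inverse invertible_right_inverse by blast+
  then show ?thesis
    using group.inv_equality[OF group_Aff2] inv_aff_comp[OF assms] aff_in_carrier_Aff2 by simp
qed

lemma group_hom_Lin: "group_hom Aff2 GL2 Lin"
  unfolding group_hom_def group_hom_axioms_def
  by (auto simp: group_Aff2 group_GL2 carrier_Aff2 carrier_GL2 aff_comp invertible_mult intro!: homI)

lemma group_hom_aff_linear: "group_hom GL2 Aff2 (\<lambda>M. aff M 0)"
  unfolding group_hom_def group_hom_axioms_def
  by (auto simp: group_Aff2 group_GL2 aff_in_carrier_Aff2 carrier_GL2 aff_comp invertible_mult intro!: homI)

definition det2 :: "'a::field^2 \<Rightarrow> 'a^2 \<Rightarrow> 'a" where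
  "det2 u e = u$1 * e$2 - u$2 * e$1"

lemma vec2_eq_iff: "(x::'a^2) = y \<longleftrightarrow> x$1 = y$1 \<and> x$2 = y$2"
  by (simp add: vec_eq_iff forall_2)

lemma det2_nonzero_imp_basis:
  fixes u e x :: "'a::field^2"
  assumes "det2 u e \<noteq> 0"
  obtains a b where "x = a *s u + b *s e"
proof
  let ?d = "det2 u e" and ?a = "x$1 * e$2 - x$2 * e$1" and ?b = "u$1 * x$2 - u$2 * x$1"
  have "(?a / ?d) * u$i + (?b / ?d) * e$i = x$i" if "i = 1 \<or> i = 2" for i
  proof -
    have "(?a / ?d) * u$i + (?b / ?d) * e$i = (?a * u$i + ?b * e$i) / ?d"
      by (simp only: times_divide_eq_left add_divide_distrib)
    also have "?a * u$i + ?b * e$i = x$i * ?d"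
      using that by (auto simp: det2_def algebra_simps)
    finally show ?thesis
      using assms by simp
  qed
  then show "x = (?a / ?d) *s u + (?b / ?d) *s e"
    unfolding vec2_eq_iff by simp
qed

lemma ex_det2_nonzero:
  assumes "u \<noteq> 0"
  obtains e where "det2 u e \<noteq> 0"
proof (cases "u$1 = 0")
  case True
  then have "det2 u (vector [1, 0]) \<noteq> 0"
    using assms by (simp add: det2_def vec2_eq_iff)
  then show ?thesis ..
next
  case False
  then have "det2 u (vector [0, 1]) \<noteq> 0"
    by (simp add: det2_def)
  then show ?thesis ..
qed

lemma det2_eq_zero_imp_collinear:
  assumes "u \<noteq> 0" "det2 u r = 0"
  obtains c where "r = c *s u"
proof (cases "u$1 = 0")
  case True
  then have "u$2 \<noteq> 0"
    using assms(1) by (simp add: vec2_eq_iff)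
  then have "r = (r$2 / u$2) *s u"
    using True assms(2) unfolding vec2_eq_iff det2_def by (simp add: field_simps)
  then show ?thesis ..
next
  case False
  then have "r = (r$1 / u$1) *s u"
    using assms(2) unfolding vec2_eq_iff det2_def by (simp add: field_simps)
  then show ?thesis ..
qed

lemma unipotent_finite_order_eq_one:
  fixes k :: "complex^2^2" and n :: nat
  assumes basis: "det2 u e \<noteq> 0" and ku: "k *v u = u" and ke: "k *v e = e + c *s u"
    and order: "k [^]\<^bsub>GL2\<^esub> n = mat 1" and n: "n > 0"
  shows "k = mat 1"
proof -
  have u: "u \<noteq> 0"
    using basis by (auto simp: det2_def)
  have pow: "(k [^]\<^bsub>GL2\<^esub> m) *v u = u \<and> (k [^]\<^bsub>GL2\<^esub> m) *v e = e + (of_nat m * c) *s u" for m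
  proof (induction m)
    case (Suc m)
    then show ?case
      using ku ke by (simp add: matrix_vector_mul_assoc[symmetric] vector_scalar_commute algebra_simps)
  qed simp
  have "c = 0"
    using pow[where m = n] order u n by simp
  have "k *v x = mat 1 *v x" for x
  proof -
    obtain a b where "x = a *s u + b *s e"
      using det2_nonzero_imp_basis[OF basis] .
    then show ?thesis
      using ku ke \<open>c = 0\<close> by (simp add: matrix_vector_right_distrib vector_scalar_commute)
  qed
  then show ?thesis
    by (simp add: matrix_eq)
qed

lemma cyclic_if_displacements_collinear:
  assumes H: "subgroup H GL2" and fin: "finite H" and u: "u \<noteq> 0"
    and collinear: "\<And>h w. h \<in> H \<Longrightarrow> \<exists>c. h *v w - w = c *s u"
  shows "cyclic_group (subgroup_generated GL2 H)"
proof -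
  interpret GL2: group GL2
    by (rule group_GL2)
  have translate: "h *v w = w + c *s u" if "h *v w - w = c *s u" for h w c
    using that by (metis add.commute diff_add_cancel)
  define \<rho> where "\<rho> h = (SOME c. h *v u = c *s u)" for h
  have eigen: "h *v u = \<rho> h *s u" if h: "h \<in> H" for h
  proof -
    obtain c where "h *v u - u = c *s u"
      using collinear h by blast
    then have "h *v u = (1 + c) *s u"
      using translate by simp
    then show ?thesis
      unfolding \<rho>_def by (rule someI)
  qed
  have \<rho>_unique: "\<rho> h = c" if "h \<in> H" "h *v u = c *s u" for h c
    using eigen[OF that(1)] that(2) u by simp
  have \<rho>_mult: "\<rho> (g ** h) = \<rho> g * \<rho> h" if "g \<in> H" "h \<in> H" for g h
    using that subgroup.m_closed[OF H, of g h] eigen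
    by (intro \<rho>_unique) (simp_all flip: matrix_vector_mul_assoc add: vector_scalar_commute mult.commute)
  have \<rho>_one: "\<rho> (mat 1) = 1"
    using subgroup.one_closed[OF H] by (intro \<rho>_unique) simp_all
  have kernel: "k = mat 1" if k: "k \<in> H" and "\<rho> k = 1" for k
  proof -
    obtain e where e: "det2 u e \<noteq> 0"
      using ex_det2_nonzero[OF u] .
    obtain c where "k *v e - e = c *s u"
      using collinear k by blast
    then have ke: "k *v e = e + c *s u"
      by (rule translate)
    have ku: "k *v u = u"
      using eigen[OF k] \<open>\<rho> k = 1\<close> by simp
    have "k [^]\<^bsub>GL2\<^esub> card H = mat 1"
      using GL2.pow_card_subgroup_eq_one[OF H k] by simp
    moreover have "card H > 0"
      using fin subgroup.one_closed[OF H] by (auto simp: card_gt_0_iff)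
    ultimately show ?thesis
      by (rule unipotent_finite_order_eq_one[OF e ku ke])
  qed
  have "inj_on \<rho> H"
  proof (rule inj_onI)
    fix g h
    assume g: "g \<in> H" and h: "h \<in> H" and "\<rho> g = \<rho> h"
    have g': "inv\<^bsub>GL2\<^esub> g \<in> H" and gc: "g \<in> carrier GL2" and hc: "h \<in> carrier GL2"
      using g h H by (auto simp: subgroup.m_inv_closed subgroup.mem_carrier)
    have "\<rho> (inv\<^bsub>GL2\<^esub> g) * \<rho> g = 1"
      using \<rho>_mult[OF g' g] GL2.l_inv[OF gc] \<rho>_one by simp
    then have "\<rho> (inv\<^bsub>GL2\<^esub> g ** h) = 1"
      using \<rho>_mult[OF g' h] \<open>\<rho> g = \<rho> h\<close> by simp
    then have "inv\<^bsub>GL2\<^esub> g \<otimes>\<^bsub>GL2\<^esub> h = \<one>\<^bsub>GL2\<^esub>"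
      using kernel subgroup.m_closed[OF H g' h] by simp
    then have "g = g \<otimes>\<^bsub>GL2\<^esub> (inv\<^bsub>GL2\<^esub> g \<otimes>\<^bsub>GL2\<^esub> h)"
      using gc by simp
    also have "\<dots> = h"
      using gc hc by (simp del: mult_GL2 one_GL2 add: GL2.m_assoc[symmetric])
    finally show "g = h" .
  qed
  then show ?thesis
    using \<rho>_one \<rho>_mult by (intro GL2.cyclic_if_inj_character[OF H fin, of \<rho>]) simp_all
qed

lemma sum_of_two_displacements:
  assumes H: "subgroup H GL2" and fin: "finite H"
    and noncyclic: "\<not> cyclic_group (subgroup_generated GL2 H)"
  obtains h1 h2 w1 w2 where "h1 \<in> H" "h2 \<in> H" "x = (h1 *v w1 - w1) + (h2 *v w2 - w2)"
proof -
  have "(vector [1, 0] :: complex^2) \<noteq> 0"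
    by (simp add: vec2_eq_iff)
  then obtain h0 w0 where h0: "h0 \<in> H" and "\<nexists>c. h0 *v w0 - w0 = c *s vector [1, 0]"
    using cyclic_if_displacements_collinear[OF H fin] noncyclic by blast
  then have u: "h0 *v w0 - w0 \<noteq> 0"
    by (metis vector_smult_lzero)
  obtain h w where h: "h \<in> H" and "\<nexists>c. h *v w - w = c *s (h0 *v w0 - w0)"
    using cyclic_if_displacements_collinear[OF H fin u] noncyclic by blast
  then have "det2 (h0 *v w0 - w0) (h *v w - w) \<noteq> 0"
    using det2_eq_zero_imp_collinear[OF u] by metis
  then obtain a b where "x = a *s (h0 *v w0 - w0) + b *s (h *v w - w)"
    using det2_nonzero_imp_basis by blast
  then have "x = (h0 *v (a *s w0) - a *s w0) + (h *v (b *s w) - b *s w)"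
    by (simp add: vector_scalar_commute)
  then show ?thesis
    using that h0 h by blast
qed

lemma Lpre_subset_carrier: "Lpre H \<subseteq> carrier Aff2"
  by (auto simp: Lpre_def)

lemma aff_in_Lpre: "M \<in> H \<Longrightarrow> H \<subseteq> carrier GL2 \<Longrightarrow> aff M w \<in> Lpre H"
  by (auto simp: Lpre_def carrier_GL2 aff_in_carrier_Aff2)

lemma translation_by_displacement_in_derived:
  assumes H: "subgroup H GL2" and h: "h \<in> H"
  shows "aff (mat 1) (h *v w - w) \<in> derived Aff2 (Lpre H)"
proof -
  have HC: "H \<subseteq> carrier GL2"
    using H by (rule subgroup.subset)
  have "invertible h"
    using h HC by (auto simp: carrier_GL2)
  then obtain h' where h': "h' ** h = mat 1" "h ** h' = mat 1"
    unfolding invertible_def by blast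
  have rotation: "aff h 0 \<in> Lpre H" and translation: "aff (mat 1) w \<in> Lpre H"
    using h subgroup.one_closed[OF H] HC by (simp_all add: aff_in_Lpre)
  have "aff h 0 \<otimes>\<^bsub>Aff2\<^esub> aff (mat 1) w \<otimes>\<^bsub>Aff2\<^esub> inv\<^bsub>Aff2\<^esub> (aff h 0) \<otimes>\<^bsub>Aff2\<^esub> inv\<^bsub>Aff2\<^esub> (aff (mat 1) w)
      \<in> derived_set Aff2 (Lpre H)"
    by (rule UN_I[OF rotation], rule UN_I[OF translation]) simp
  moreover have "inv\<^bsub>Aff2\<^esub> (aff h 0) = aff h' 0" "inv\<^bsub>Aff2\<^esub> (aff (mat 1) w) = aff (mat 1) (- w)"
    using inv_Aff2_aff[OF h'(1), of 0] inv_Aff2_aff[of "mat 1" "mat 1" w] by simp_all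
  ultimately have "aff h 0 \<circ> aff (mat 1) w \<circ> aff h' 0 \<circ> aff (mat 1) (- w) \<in> derived Aff2 (Lpre H)"
    unfolding derived_def by (auto intro: generate.incl)
  moreover have "aff h 0 \<circ> aff (mat 1) w \<circ> aff h' 0 \<circ> aff (mat 1) (- w) = aff (mat 1) (h *v w - w)"
    using h' by (simp add: aff_comp matrix_mul_assoc)
  ultimately show ?thesis
    by simp
qed

lemma translations_in_derived:
  assumes "subgroup H GL2" "finite H" "\<not> cyclic_group (subgroup_generated GL2 H)"
  shows "aff (mat 1) x \<in> derived Aff2 (Lpre H)"
proof -
  obtain h1 h2 w1 w2 where h: "h1 \<in> H" "h2 \<in> H" and x: "x = (h1 *v w1 - w1) + (h2 *v w2 - w2)"
    using sum_of_two_displacements[OF assms] .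
  have "aff (mat 1) (h1 *v w1 - w1) \<otimes>\<^bsub>Aff2\<^esub> aff (mat 1) (h2 *v w2 - w2) \<in> derived Aff2 (Lpre H)"
    using group.derived_is_subgroup[OF group_Aff2 Lpre_subset_carrier] h
    by (intro subgroup.m_closed translation_by_displacement_in_derived assms(1))
  then show ?thesis
    by (simp add: x aff_comp add.commute)
qed

lemma Lin_image_Lpre:
  assumes "H \<subseteq> carrier GL2"
  shows "Lin ` Lpre H = H"
proof
  show "Lin ` Lpre H \<subseteq> H"
    by (auto simp: Lpre_def)
  show "H \<subseteq> Lin ` Lpre H"
    using aff_in_Lpre[OF _ assms] Lin_aff by (metis image_eqI subsetI)
qed

lemma derived_Lpre_subset:
  assumes "H \<subseteq> carrier GL2"
  shows "derived Aff2 (Lpre H) \<subseteq> Lpre (derived GL2 H)"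
proof -
  have "Lin ` derived Aff2 (Lpre H) = derived GL2 H"
    using group_hom.derived_img[OF group_hom_Lin Lpre_subset_carrier[of H]] Lin_image_Lpre[OF assms] by simp
  then show ?thesis
    using group.derived_in_carrier[OF group_Aff2 Lpre_subset_carrier] by (auto simp: Lpre_def)
qed

lemma Lpre_derived_subset:
  assumes HC: "H \<subseteq> carrier GL2"
    and translations_in: "\<And>x. aff (mat 1) x \<in> derived Aff2 (Lpre H)"
  shows "Lpre (derived GL2 H) \<subseteq> derived Aff2 (Lpre H)"
proof
  fix f
  assume f: "f \<in> Lpre (derived GL2 H)"
  then obtain M w where M: "M \<in> derived GL2 H" and f_eq: "f = aff M w"
    by (auto simp: Lpre_def carrier_Aff2)
  have "(\<lambda>M. aff M 0) ` derived GL2 H = derived Aff2 ((\<lambda>M. aff M 0) ` H)"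
    using group_hom.derived_img[OF group_hom_aff_linear HC] by simp
  also have "\<dots> \<subseteq> derived Aff2 (Lpre H)"
    using aff_in_Lpre[OF _ HC] by (intro group.mono_derived[OF group_Aff2] Lpre_subset_carrier) auto
  finally have "aff M 0 \<in> derived Aff2 (Lpre H)"
    using M by blast
  then have "aff (mat 1) w \<otimes>\<^bsub>Aff2\<^esub> aff M 0 \<in> derived Aff2 (Lpre H)"
    using group.derived_is_subgroup[OF group_Aff2 Lpre_subset_carrier] translations_in
    by (intro subgroup.m_closed)
  then show "f \<in> derived Aff2 (Lpre H)"
    by (simp add: f_eq aff_comp)
qed

theorem lemma3p20:
  assumes "subgroup H GL2"
    and "finite H"
    and "\<not> cyclic_group (subgroup_generated GL2 H)"
  shows "derived Aff2 (Lpre H) = Lpre (derived GL2 H)"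
proof
  have HC: "H \<subseteq> carrier GL2"
    using assms(1) by (rule subgroup.subset)
  show "derived Aff2 (Lpre H) \<subseteq> Lpre (derived GL2 H)"
    using HC by (rule derived_Lpre_subset)
  show "Lpre (derived GL2 H) \<subseteq> derived Aff2 (Lpre H)"
    using HC translations_in_derived[OF assms] by (rule Lpre_derived_subset)
qed

end
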